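(* For every finite graph $G$, $\widetilde{\Delta}(G) \leq \alpha^{\ast}(G)^{\widetilde{\omega}(G)}$.
   Context: Two vertices of $G$ are equivalent if they lie in exactly the same maximal cliques of $G$. The clique-quotient graph $\widetilde{G}$ has the equivalence classes as vertices, two distinct classes adjacent iff their representatives are adjacent in $G$; $\widetilde{\Delta}(G)$ is the maximum degree of $\widetilde{G}$. $\widetilde{\omega}(G)$ is the maximum over maximal cliques $K$ of the number of equivalence classes meeting $K$. $\alpha^{\ast}(G)=\max_v\alpha(G[N[v]])$. *)

theory Defs
  imports Main
begin

definition fin_graph :: "'a set \<Rightarrow> ('a \<Rightarrow> 'a \<Rightarrow> bool) \<Rightarrow> bool" where
  "fin_graph V E \<longleftrightarrow> finite V \<and> (\<forall>u v. E u v \<longrightarrow> u \<in> V \<and> v \<in> V) \<and>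
     (\<forall>u v. E u v \<longrightarrow> E v u) \<and> (\<forall>v. \<not> E v v)"

definition is_clique :: "'a set \<Rightarrow> ('a \<Rightarrow> 'a \<Rightarrow> bool) \<Rightarrow> 'a set \<Rightarrow> bool" where
  "is_clique V E K \<longleftrightarrow> K \<subseteq> V \<and> (\<forall>x\<in>K. \<forall>y\<in>K. x \<noteq> y \<longrightarrow> E x y)"

definition max_clique :: "'a set \<Rightarrow> ('a \<Rightarrow> 'a \<Rightarrow> bool) \<Rightarrow> 'a set \<Rightarrow> bool" where
  "max_clique V E K \<longleftrightarrow> is_clique V E K \<and> (\<forall>K'. is_clique V E K' \<and> K \<subseteq> K' \<longrightarrow> K' = K)"

definition clique_equiv :: "'a set \<Rightarrow> ('a \<Rightarrow> 'a \<Rightarrow> bool) \<Rightarrow> ('a \<times> 'a) set" where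
  "clique_equiv V E = {(u, v). u \<in> V \<and> v \<in> V \<and>
     {K. max_clique V E K \<and> u \<in> K} = {K. max_clique V E K \<and> v \<in> K}}"

text \<open>Vertices of the clique-quotient graph: the equivalence classes.\<close>
definition clique_classes :: "'a set \<Rightarrow> ('a \<Rightarrow> 'a \<Rightarrow> bool) \<Rightarrow> 'a set set" where
  "clique_classes V E = V // clique_equiv V E"

definition quot_adj :: "('a \<Rightarrow> 'a \<Rightarrow> bool) \<Rightarrow> 'a set \<Rightarrow> 'a set \<Rightarrow> bool" where
  "quot_adj E C D \<longleftrightarrow> C \<noteq> D \<and> (\<exists>u\<in>C. \<exists>v\<in>D. E u v)"

definition quot_max_degree :: "'a set \<Rightarrow> ('a \<Rightarrow> 'a \<Rightarrow> bool) \<Rightarrow> nat" where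
  "quot_max_degree V E = Max (insert 0
     ((\<lambda>C. card {D \<in> clique_classes V E. quot_adj E C D}) ` clique_classes V E))"

definition quot_omega :: "'a set \<Rightarrow> ('a \<Rightarrow> 'a \<Rightarrow> bool) \<Rightarrow> nat" where
  "quot_omega V E = Max (insert 0
     ((\<lambda>K. card {C \<in> clique_classes V E. C \<inter> K \<noteq> {}}) ` {K. max_clique V E K}))"

definition closed_nbhd :: "'a set \<Rightarrow> ('a \<Rightarrow> 'a \<Rightarrow> bool) \<Rightarrow> 'a \<Rightarrow> 'a set" where
  "closed_nbhd V E v = insert v {u \<in> V. E v u}"

definition indep_set :: "('a \<Rightarrow> 'a \<Rightarrow> bool) \<Rightarrow> 'a set \<Rightarrow> bool" where
  "indep_set E S \<longleftrightarrow> (\<forall>x\<in>S. \<forall>y\<in>S. \<not> E x y)"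

definition alpha_on :: "('a \<Rightarrow> 'a \<Rightarrow> bool) \<Rightarrow> 'a set \<Rightarrow> nat" where
  "alpha_on E W = Max {card S | S. S \<subseteq> W \<and> indep_set E S}"

definition alpha_star :: "'a set \<Rightarrow> ('a \<Rightarrow> 'a \<Rightarrow> bool) \<Rightarrow> nat" where
  "alpha_star V E = Max (insert 0 ((\<lambda>v. alpha_on E (closed_nbhd V E v)) ` V))"

end

theory Submission
  imports Defs
begin

text \<open>Work in the clique-quotient graph H, with a = \<alpha>*(G) and k = \<omega>~(G).
  Every class is a clique and adjacent classes are completely joined in G, so the union
  of the classes of a clique of H is a clique of G; a maximal clique containing it meets
  all of them, hence cliques of H have at most k vertices. Representatives of an
  independent set of H inside the neighbourhood of a class C are independent in the
  closed neighbourhood of a representative of C, hence they number at most a.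
  In any finite graph with these two properties, the common neighbourhood of a nonempty
  clique Q has at most a + a^2 + ... + a^(k - |Q|) vertices: a maximal independent
  subset S of it has at most a elements, and every other common neighbour lies in the
  common neighbourhood of the larger clique Q \<union> {s} for some s \<in> S. Taking Q a single
  class bounds the degree by a^k - a when a \<ge> 2. If a \<le> 1, every closed neighbourhood
  of G is a clique, so adjacent vertices lie in the same maximal cliques and H has no
  edges.\<close>

lemma sum_powers_Suc:
  fixes a :: nat
  shows "(\<Sum>i=1..Suc n. a ^ i) = a + a * (\<Sum>i=1..n. a ^ i)"
proof -
  have "(\<Sum>i=1..Suc n. a ^ i) = (\<Sum>i=0..n. a ^ Suc i)"
    using sum.shift_bounds_cl_Suc_ivl[of "\<lambda>i. a ^ i" 0 n] by simp
  also have "\<dots> = a * (\<Sum>i=0..n. a ^ i)"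
    by (simp add: sum_distrib_left)
  also have "\<dots> = a + a * (\<Sum>i=1..n. a ^ i)"
    by (simp add: sum.atLeast_Suc_atMost algebra_simps)
  finally show ?thesis .
qed

lemma sum_powers_plus_le_power:
  fixes a :: nat
  assumes "2 \<le> a"
  shows "(\<Sum>i=1..n. a ^ i) + a \<le> a ^ Suc n"
proof (induction n)
  case 0
  then show ?case by simp
next
  case (Suc n)
  have "(\<Sum>i=1..Suc n. a ^ i) + a = 2 * a + a * (\<Sum>i=1..n. a ^ i)"
    unfolding sum_powers_Suc by simp
  also have "\<dots> \<le> a * ((\<Sum>i=1..n. a ^ i) + a)"
    using assms by (simp add: algebra_simps)
  also have "\<dots> \<le> a * a ^ Suc n"
    using Suc.IH by simp
  finally show ?case
    by simp
qed

lemma is_clique_insert: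
  assumes "is_clique U A Q" "x \<in> U" "\<forall>q\<in>Q. A q x" "\<And>x y. A x y \<Longrightarrow> A y x"
  shows "is_clique U A (insert x Q)"
  using assms unfolding is_clique_def by auto

lemma maximal_indep_subset_dominates:
  assumes "finite X" and irrefl: "\<And>x. \<not> A x x" and sym: "\<And>x y. A x y \<Longrightarrow> A y x"
  obtains S where "S \<subseteq> X" "indep_set A S" "\<And>x. x \<in> X \<Longrightarrow> x \<notin> S \<Longrightarrow> \<exists>s\<in>S. A s x"
proof -
  define P where "P = {S. S \<subseteq> X \<and> indep_set A S}"
  have "finite P"
    unfolding P_def using \<open>finite X\<close> by simp
  moreover have "{} \<in> P"
    unfolding P_def indep_set_def by simp
  ultimately obtain S where S: "S \<in> P" and maximal: "\<And>T. T \<in> P \<Longrightarrow> S \<subseteq> T \<Longrightarrow> S = T"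
    using finite_has_maximal[of P] by blast
  have "\<exists>s\<in>S. A s x" if "x \<in> X" "x \<notin> S" for x
  proof (rule ccontr)
    assume "\<not> (\<exists>s\<in>S. A s x)"
    then have "insert x S \<in> P"
      using S that irrefl sym unfolding P_def indep_set_def by blast
    then show False
      using maximal \<open>x \<notin> S\<close> by blast
  qed
  with S show thesis
    using that unfolding P_def by blast
qed

lemma card_le_if_covered:
  assumes "finite S" "\<And>s. s \<in> S \<Longrightarrow> finite (Y s)" "\<And>s. s \<in> S \<Longrightarrow> card (Y s) \<le> b"
    and "X \<subseteq> S \<union> (\<Union>s\<in>S. Y s)"
  shows "card X \<le> card S + card S * b"
proof -
  have "card X \<le> card (S \<union> (\<Union>s\<in>S. Y s))"
    using assms(1,2,4) by (intro card_mono) auto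
  also have "\<dots> \<le> card S + card (\<Union>s\<in>S. Y s)"
    by (rule card_Un_le)
  also have "\<dots> \<le> card S + (\<Sum>s\<in>S. card (Y s))"
    using card_UN_le[OF assms(1)] by simp
  also have "\<dots> \<le> card S + card S * b"
    using sum_bounded_above[of S "\<lambda>s. card (Y s)" b] assms(3) by simp
  finally show ?thesis .
qed

lemma common_neighbours_eq_empty_if_clique_max:
  assumes "finite U" "\<And>x. \<not> A x x" "\<And>x y. A x y \<Longrightarrow> A y x"
    and "\<And>Q. is_clique U A Q \<Longrightarrow> card Q \<le> k"
    and "is_clique U A Q" "k \<le> card Q"
  shows "{x \<in> U. \<forall>q\<in>Q. A q x} = {}"
proof (rule ccontr)
  assume "{x \<in> U. \<forall>q\<in>Q. A q x} \<noteq> {}"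
  then obtain x where x: "x \<in> U" "\<forall>q\<in>Q. A q x"
    by blast
  have "finite Q" "x \<notin> Q"
    using assms(1,2,5) x finite_subset unfolding is_clique_def by blast+
  then have "card (insert x Q) > k"
    using assms(6) by simp
  moreover have "card (insert x Q) \<le> k"
    using assms(4) is_clique_insert[OF assms(5) x assms(3)] by blast
  ultimately show False
    by simp
qed

lemma card_common_neighbours_le_step:
  fixes A :: "'b \<Rightarrow> 'b \<Rightarrow> bool"
  assumes fin: "finite U" and irrefl: "\<And>x. \<not> A x x" and sym: "\<And>x y. A x y \<Longrightarrow> A y x"
    and local_indep_bound:
      "\<And>c S. c \<in> U \<Longrightarrow> S \<subseteq> {x \<in> U. A c x} \<Longrightarrow> indep_set A S \<Longrightarrow> card S \<le> a"
    and "c \<in> Q" "c \<in> U"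
    and larger_clique_bound:
      "\<And>s. s \<in> U \<Longrightarrow> \<forall>q\<in>Q. A q s \<Longrightarrow> card {x \<in> U. \<forall>q\<in>insert s Q. A q x} \<le> b"
  shows "card {x \<in> U. \<forall>q\<in>Q. A q x} \<le> a + a * b"
proof -
  define X where "X = {x \<in> U. \<forall>q\<in>Q. A q x}"
  define Y where "Y s = {x \<in> U. \<forall>q\<in>insert s Q. A q x}" for s
  have "finite X"
    unfolding X_def using fin by simp
  then obtain S where "S \<subseteq> X" "indep_set A S"
    and dominating: "\<And>x. x \<in> X \<Longrightarrow> x \<notin> S \<Longrightarrow> \<exists>s\<in>S. A s x"
    using maximal_indep_subset_dominates irrefl sym by metis
  have "card S \<le> a"
    using local_indep_bound[OF \<open>c \<in> U\<close> _ \<open>indep_set A S\<close>] \<open>S \<subseteq> X\<close> \<open>c \<in> Q\<close>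
    unfolding X_def by blast
  have "card (Y s) \<le> b" if "s \<in> S" for s
    using larger_clique_bound that \<open>S \<subseteq> X\<close> unfolding X_def Y_def by blast
  moreover have "X \<subseteq> S \<union> (\<Union>s\<in>S. Y s)"
    using dominating unfolding X_def Y_def by fastforce
  moreover have "finite S"
    using \<open>S \<subseteq> X\<close> \<open>finite X\<close> finite_subset by blast
  moreover have "finite (Y s)" for s
    unfolding Y_def using fin by simp
  ultimately have "card X \<le> card S + card S * b"
    using card_le_if_covered[of S Y] by blast
  also have "\<dots> \<le> a + a * b"
    using \<open>card S \<le> a\<close> by (intro add_mono mult_right_mono) auto
  finally show ?thesis
    unfolding X_def .
qed

lemma card_common_neighbours_le:
  fixes A :: "'b \<Rightarrow> 'b \<Rightarrow> bool"
  assumes fin: "finite U" and irrefl: "\<And>x. \<not> A x x" and sym: "\<And>x y. A x y \<Longrightarrow> A y x"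
    and clique_bound: "\<And>Q. is_clique U A Q \<Longrightarrow> card Q \<le> k"
    and local_indep_bound:
      "\<And>c S. c \<in> U \<Longrightarrow> S \<subseteq> {x \<in> U. A c x} \<Longrightarrow> indep_set A S \<Longrightarrow> card S \<le> a"
  shows "is_clique U A Q \<Longrightarrow> Q \<noteq> {} \<Longrightarrow> k \<le> card Q + n
    \<Longrightarrow> card {x \<in> U. \<forall>q\<in>Q. A q x} \<le> (\<Sum>i=1..n. a ^ i)"
proof (induction n arbitrary: Q)
  case 0
  have "k \<le> card Q"
    using "0.prems"(3) by simp
  with fin irrefl sym clique_bound "0.prems"(1) have "{x \<in> U. \<forall>q\<in>Q. A q x} = {}"
    by (rule common_neighbours_eq_empty_if_clique_max)
  then show ?case
    by (metis card.empty zero_le)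
next
  case (Suc n)
  obtain c where "c \<in> Q" "c \<in> U"
    using Suc.prems(1,2) unfolding is_clique_def by blast
  have "finite Q"
    using Suc.prems(1) fin finite_subset unfolding is_clique_def by blast
  have "card {x \<in> U. \<forall>q\<in>insert s Q. A q x} \<le> (\<Sum>i=1..n. a ^ i)"
    if "s \<in> U" "\<forall>q\<in>Q. A q s" for s
  proof (rule Suc.IH)
    show "is_clique U A (insert s Q)"
      using is_clique_insert[OF Suc.prems(1) that sym] .
    have "s \<notin> Q"
      using that(2) irrefl by blast
    with \<open>finite Q\<close> show "k \<le> card (insert s Q) + n"
      using Suc.prems(3) by simp
  qed simp
  with fin irrefl sym local_indep_bound \<open>c \<in> Q\<close> \<open>c \<in> U\<close>
  have "card {x \<in> U. \<forall>q\<in>Q. A q x} \<le> a + a * (\<Sum>i=1..n. a ^ i)"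
    by (rule card_common_neighbours_le_step)
  then show ?case
    by (simp only: sum_powers_Suc)
qed

lemma fin_graph_finite: "fin_graph V E \<Longrightarrow> finite V"
  unfolding fin_graph_def by blast

lemma fin_graph_sym: "fin_graph V E \<Longrightarrow> E u v \<Longrightarrow> E v u"
  unfolding fin_graph_def by blast

lemma fin_graph_irrefl: "fin_graph V E \<Longrightarrow> \<not> E v v"
  unfolding fin_graph_def by blast

lemma fin_graph_edge_vertices: "fin_graph V E \<Longrightarrow> E u v \<Longrightarrow> u \<in> V \<and> v \<in> V"
  unfolding fin_graph_def by blast

lemma is_clique_subset: "is_clique V E K \<Longrightarrow> C \<subseteq> K \<Longrightarrow> is_clique V E C"
  unfolding is_clique_def by auto

lemma clique_subset_closed_nbhd: "is_clique V E K \<Longrightarrow> u \<in> K \<Longrightarrow> K \<subseteq> closed_nbhd V E u"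
  unfolding is_clique_def closed_nbhd_def by auto

lemma finite_max_cliques: "finite V \<Longrightarrow> finite {K. max_clique V E K}"
  by (rule finite_subset[of _ "Pow V"]) (auto simp: max_clique_def is_clique_def)

lemma clique_extends_to_max_clique:
  assumes "finite V" and "is_clique V E K"
  obtains K' where "max_clique V E K'" "K \<subseteq> K'"
proof -
  have "finite {K. is_clique V E K}"
    by (rule finite_subset[of _ "Pow V"]) (auto simp: is_clique_def \<open>finite V\<close>)
  then obtain K' where "is_clique V E K'" "K \<subseteq> K'"
    and "\<forall>K''\<in>{K. is_clique V E K}. K' \<subseteq> K'' \<longrightarrow> K' = K''"
    using finite_has_maximal2[of _ K] \<open>is_clique V E K\<close> by blast
  then show thesis
    using that unfolding max_clique_def by blast
qed

lemma equiv_clique_equiv: "equiv V (clique_equiv V E)"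
  unfolding equiv_def refl_on_def sym_def trans_def clique_equiv_def by auto

lemma clique_equiv_max_clique_iff:
  "(u, w) \<in> clique_equiv V E \<Longrightarrow> max_clique V E K \<Longrightarrow> u \<in> K \<longleftrightarrow> w \<in> K"
  unfolding clique_equiv_def by blast

lemma finite_clique_classes: "finite V \<Longrightarrow> finite (clique_classes V E)"
  unfolding clique_classes_def by (rule finite_quotient) (auto simp: clique_equiv_def)

lemma clique_class_subset: "C \<in> clique_classes V E \<Longrightarrow> C \<subseteq> V"
  unfolding clique_classes_def by (rule in_quotient_imp_subset[OF equiv_clique_equiv])

lemma clique_class_nonempty: "C \<in> clique_classes V E \<Longrightarrow> C \<noteq> {}"
  unfolding clique_classes_def by (rule in_quotient_imp_non_empty[OF equiv_clique_equiv])

lemma clique_classes_disjoint: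
  assumes "C \<in> clique_classes V E" "D \<in> clique_classes V E" "x \<in> C" "x \<in> D"
  shows "C = D"
  using quotient_disj[OF equiv_clique_equiv] assms unfolding clique_classes_def by blast

lemma clique_class_closed:
  "C \<in> clique_classes V E \<Longrightarrow> u \<in> C \<Longrightarrow> (u, w) \<in> clique_equiv V E \<Longrightarrow> w \<in> C"
  unfolding clique_classes_def by (rule in_quotient_imp_closed[OF equiv_clique_equiv])

lemma clique_class_subset_max_clique:
  assumes "C \<in> clique_classes V E" "max_clique V E K" "C \<inter> K \<noteq> {}"
  shows "C \<subseteq> K"
proof
  fix w
  assume "w \<in> C"
  obtain u where "u \<in> C" "u \<in> K"
    using assms(3) by blast
  have "(u, w) \<in> clique_equiv V E"
    using assms(1) \<open>u \<in> C\<close> \<open>w \<in> C\<close> unfolding clique_classes_def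
    by (intro in_quotient_imp_in_rel[OF equiv_clique_equiv]) auto
  then show "w \<in> K"
    using clique_equiv_max_clique_iff[OF _ assms(2)] \<open>u \<in> K\<close> by simp
qed

lemma clique_class_is_clique:
  assumes "fin_graph V E" "C \<in> clique_classes V E"
  shows "is_clique V E C"
proof -
  obtain u where "u \<in> C"
    using clique_class_nonempty[OF assms(2)] by blast
  then have "is_clique V E {u}"
    using clique_class_subset[OF assms(2)] unfolding is_clique_def by blast
  then obtain K where "max_clique V E K" "u \<in> K"
    using clique_extends_to_max_clique fin_graph_finite[OF assms(1)] by blast
  then have "C \<subseteq> K"
    using clique_class_subset_max_clique[OF assms(2)] \<open>u \<in> C\<close> by blast
  with \<open>max_clique V E K\<close> show ?thesis
    unfolding max_clique_def using is_clique_subset by blast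
qed

lemma quot_adj_imp_edge:
  assumes "fin_graph V E" "C \<in> clique_classes V E" "D \<in> clique_classes V E"
    and "quot_adj E C D" "u \<in> C" "w \<in> D"
  shows "E u w"
proof -
  obtain u' w' where "C \<noteq> D" "u' \<in> C" "w' \<in> D" "E u' w'"
    using assms(4) unfolding quot_adj_def by blast
  then have "is_clique V E {u', w'}"
    using fin_graph_sym[OF assms(1)] fin_graph_edge_vertices[OF assms(1)]
    unfolding is_clique_def by auto
  then obtain K where K: "max_clique V E K" "{u', w'} \<subseteq> K"
    using clique_extends_to_max_clique fin_graph_finite[OF assms(1)] by metis
  have "C \<subseteq> K" "D \<subseteq> K"
    using clique_class_subset_max_clique[OF _ K(1)] assms(2,3) K(2) \<open>u' \<in> C\<close> \<open>w' \<in> D\<close>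
    by auto
  then have "u \<in> K" "w \<in> K"
    using assms(5,6) by auto
  moreover have "u \<noteq> w"
    using clique_classes_disjoint[OF assms(2,3)] \<open>C \<noteq> D\<close> assms(5,6) by auto
  moreover have "is_clique V E K"
    using K(1) unfolding max_clique_def by simp
  ultimately show ?thesis
    unfolding is_clique_def by simp
qed

lemma quot_adj_sym: "fin_graph V E \<Longrightarrow> quot_adj E C D \<Longrightarrow> quot_adj E D C"
  unfolding quot_adj_def using fin_graph_sym by fast

lemma Union_quot_clique_is_clique:
  assumes "fin_graph V E" "is_clique (clique_classes V E) (quot_adj E) Q"
  shows "is_clique V E (\<Union>Q)"
  unfolding is_clique_def
proof (intro conjI ballI impI)
  show "\<Union>Q \<subseteq> V"
    using assms(2) clique_class_subset unfolding is_clique_def by blast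
next
  fix x y
  assume "x \<in> \<Union>Q" "y \<in> \<Union>Q" "x \<noteq> y"
  then obtain C D where "C \<in> Q" "D \<in> Q" "x \<in> C" "y \<in> D"
    by blast
  then have "C \<in> clique_classes V E" "D \<in> clique_classes V E"
    using assms(2) unfolding is_clique_def by blast+
  show "E x y"
  proof (cases "C = D")
    case True
    then show ?thesis
      using clique_class_is_clique[OF assms(1) \<open>C \<in> clique_classes V E\<close>]
        \<open>x \<in> C\<close> \<open>y \<in> D\<close> \<open>x \<noteq> y\<close> unfolding is_clique_def by blast
  next
    case False
    then have "quot_adj E C D"
      using assms(2) \<open>C \<in> Q\<close> \<open>D \<in> Q\<close> unfolding is_clique_def by blast
    then show ?thesis
      using quot_adj_imp_edge[OF assms(1) \<open>C \<in> clique_classes V E\<close> \<open>D \<in> clique_classes V E\<close>]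
        \<open>x \<in> C\<close> \<open>y \<in> D\<close> by blast
  qed
qed

lemma card_classes_meeting_le_quot_omega:
  assumes "fin_graph V E" "max_clique V E K"
  shows "card {C \<in> clique_classes V E. C \<inter> K \<noteq> {}} \<le> quot_omega V E"
  unfolding quot_omega_def
  using assms finite_max_cliques[OF fin_graph_finite[OF assms(1)]] by (intro Max_ge) auto

lemma quot_clique_card_le_quot_omega:
  assumes "fin_graph V E" "is_clique (clique_classes V E) (quot_adj E) Q"
  shows "card Q \<le> quot_omega V E"
proof -
  obtain K where "max_clique V E K" "\<Union>Q \<subseteq> K"
    using clique_extends_to_max_clique[OF fin_graph_finite[OF assms(1)]
        Union_quot_clique_is_clique[OF assms]] .
  have "Q \<subseteq> clique_classes V E"
    using assms(2) unfolding is_clique_def by simp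
  then have "Q \<subseteq> {C \<in> clique_classes V E. C \<inter> K \<noteq> {}}"
    using \<open>\<Union>Q \<subseteq> K\<close> clique_class_nonempty by fastforce
  then have "card Q \<le> card {C \<in> clique_classes V E. C \<inter> K \<noteq> {}}"
    using finite_clique_classes[OF fin_graph_finite[OF assms(1)]] by (intro card_mono) auto
  also have "\<dots> \<le> quot_omega V E"
    using card_classes_meeting_le_quot_omega[OF assms(1) \<open>max_clique V E K\<close>] .
  finally show ?thesis .
qed

lemma indep_card_le_alpha_star:
  assumes "fin_graph V E" "v \<in> V" "S \<subseteq> closed_nbhd V E v" "indep_set E S"
  shows "card S \<le> alpha_star V E"
proof -
  have "finite V"
    using fin_graph_finite[OF assms(1)] .
  then have "finite (closed_nbhd V E v)"
    unfolding closed_nbhd_def by simp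
  then have "finite {card S | S. S \<subseteq> closed_nbhd V E v \<and> indep_set E S}"
    by simp
  then have "card S \<le> alpha_on E (closed_nbhd V E v)"
    unfolding alpha_on_def using assms(3,4) by (intro Max_ge) auto
  also have "\<dots> \<le> alpha_star V E"
    unfolding alpha_star_def using \<open>finite V\<close> assms(2) by (intro Max_ge) auto
  finally show ?thesis .
qed

lemma inj_on_class_representatives:
  assumes "S \<subseteq> clique_classes V E" "\<And>D. D \<in> S \<Longrightarrow> rep D \<in> D"
  shows "inj_on rep S"
proof (rule inj_onI)
  fix D D'
  assume "D \<in> S" "D' \<in> S" "rep D = rep D'"
  have "rep D \<in> D" "rep D \<in> D'"
    using assms(2)[OF \<open>D \<in> S\<close>] assms(2)[OF \<open>D' \<in> S\<close>] \<open>rep D = rep D'\<close> by simp_all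
  moreover have "D \<in> clique_classes V E" "D' \<in> clique_classes V E"
    using assms(1) \<open>D \<in> S\<close> \<open>D' \<in> S\<close> by auto
  ultimately show "D = D'"
    using clique_classes_disjoint by metis
qed

lemma indep_class_representatives:
  assumes "fin_graph V E" "indep_set (quot_adj E) S" "\<And>D. D \<in> S \<Longrightarrow> rep D \<in> D"
  shows "indep_set E (rep ` S)"
  unfolding indep_set_def
proof (intro ballI)
  fix x y
  assume "x \<in> rep ` S" "y \<in> rep ` S"
  then obtain D D' where "D \<in> S" "D' \<in> S" "x = rep D" "y = rep D'"
    by blast
  show "\<not> E x y"
  proof (cases "D = D'")
    case True
    then show ?thesis
      using fin_graph_irrefl[OF assms(1)] \<open>x = rep D\<close> \<open>y = rep D'\<close> by simp
  next
    case False
    moreover have "\<not> quot_adj E D D'"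
      using assms(2) \<open>D \<in> S\<close> \<open>D' \<in> S\<close> unfolding indep_set_def by simp
    moreover have "x \<in> D" "y \<in> D'"
      using assms(3) \<open>D \<in> S\<close> \<open>D' \<in> S\<close> \<open>x = rep D\<close> \<open>y = rep D'\<close> by auto
    ultimately show ?thesis
      unfolding quot_adj_def by auto
  qed
qed

lemma quot_local_indep_card_le_alpha_star:
  assumes "fin_graph V E" "C \<in> clique_classes V E"
    and "S \<subseteq> {D \<in> clique_classes V E. quot_adj E C D}" "indep_set (quot_adj E) S"
  shows "card S \<le> alpha_star V E"
proof -
  define rep where "rep D = (SOME x. x \<in> D)" for D :: "'a set"
  have rep: "rep D \<in> D" if "D \<in> clique_classes V E" for D
    unfolding rep_def using clique_class_nonempty[OF that] by (simp add: some_in_eq)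
  have "rep C \<in> V"
    using rep[OF assms(2)] clique_class_subset[OF assms(2)] by blast
  have "rep ` S \<subseteq> closed_nbhd V E (rep C)"
  proof
    fix x
    assume "x \<in> rep ` S"
    then obtain D where "D \<in> S" "x = rep D"
      by blast
    with assms(3) have "E (rep C) x"
      using quot_adj_imp_edge[OF assms(1,2)] rep[OF assms(2)] rep by auto
    then show "x \<in> closed_nbhd V E (rep C)"
      using fin_graph_edge_vertices[OF assms(1)] unfolding closed_nbhd_def by auto
  qed
  moreover have "indep_set E (rep ` S)"
    using indep_class_representatives[OF assms(1,4)] rep assms(3) by auto
  ultimately have "card (rep ` S) \<le> alpha_star V E"
    by (rule indep_card_le_alpha_star[OF assms(1) \<open>rep C \<in> V\<close>])
  moreover have "inj_on rep S"
    using inj_on_class_representatives[of S V E rep] rep assms(3) by auto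
  ultimately show ?thesis
    by (simp add: card_image)
qed

lemma closed_nbhd_is_clique_if_alpha_star_le_1:
  assumes "fin_graph V E" "alpha_star V E \<le> 1" "u \<in> V"
  shows "is_clique V E (closed_nbhd V E u)"
  unfolding is_clique_def
proof (intro conjI ballI impI)
  show "closed_nbhd V E u \<subseteq> V"
    using assms(3) unfolding closed_nbhd_def by auto
next
  fix x y
  assume "x \<in> closed_nbhd V E u" "y \<in> closed_nbhd V E u" "x \<noteq> y"
  show "E x y"
  proof (rule ccontr)
    assume "\<not> E x y"
    then have "indep_set E {x, y}"
      using fin_graph_sym[OF assms(1)] fin_graph_irrefl[OF assms(1)] unfolding indep_set_def by auto
    then have "card {x, y} \<le> alpha_star V E"
      using indep_card_le_alpha_star[OF assms(1,3)] \<open>x \<in> closed_nbhd V E u\<close>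
        \<open>y \<in> closed_nbhd V E u\<close> by simp
    with \<open>x \<noteq> y\<close> assms(2) show False
      by simp
  qed
qed

lemma edge_imp_clique_equiv_if_alpha_star_le_1:
  assumes "fin_graph V E" "alpha_star V E \<le> 1" "E u w"
  shows "(u, w) \<in> clique_equiv V E"
proof -
  have mem: "y \<in> K" if "max_clique V E K" "x \<in> K" "E x y" for x y K
  proof -
    have "x \<in> V" "y \<in> V"
      using fin_graph_edge_vertices[OF assms(1) \<open>E x y\<close>] by auto
    have "K \<subseteq> closed_nbhd V E x"
      using that(1) clique_subset_closed_nbhd[OF _ that(2)] unfolding max_clique_def by simp
    moreover have "y \<in> closed_nbhd V E x"
      using \<open>y \<in> V\<close> \<open>E x y\<close> unfolding closed_nbhd_def by simp
    ultimately have "is_clique V E (insert y K)"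
      by (intro is_clique_subset[OF closed_nbhd_is_clique_if_alpha_star_le_1[OF assms(1,2) \<open>x \<in> V\<close>]])
        simp
    then show "y \<in> K"
      using \<open>max_clique V E K\<close> unfolding max_clique_def by auto
  qed
  have "E w u"
    using fin_graph_sym[OF assms(1,3)] .
  then show ?thesis
    using mem[of _ u w] mem[of _ w u] assms(3) fin_graph_edge_vertices[OF assms(1,3)]
    unfolding clique_equiv_def by auto
qed

lemma no_quot_adj_if_alpha_star_le_1:
  assumes "fin_graph V E" "alpha_star V E \<le> 1" "C \<in> clique_classes V E" "D \<in> clique_classes V E"
  shows "\<not> quot_adj E C D"
proof
  assume "quot_adj E C D"
  then obtain u w where "C \<noteq> D" "u \<in> C" "w \<in> D" "E u w"
    unfolding quot_adj_def by blast
  then have "w \<in> C"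
    using clique_class_closed[OF assms(3)] edge_imp_clique_equiv_if_alpha_star_le_1[OF assms(1,2)]
    by simp
  with \<open>C \<noteq> D\<close> \<open>w \<in> D\<close> show False
    using clique_classes_disjoint[OF assms(3,4)] by simp
qed

lemma quot_max_degree_le:
  assumes "finite V" "\<And>C. C \<in> clique_classes V E \<Longrightarrow> card {D \<in> clique_classes V E. quot_adj E C D} \<le> b"
  shows "quot_max_degree V E \<le> b"
  unfolding quot_max_degree_def using assms finite_clique_classes[OF assms(1)] by auto

lemma quot_degree_le_sum_powers:
  assumes "fin_graph V E" "C \<in> clique_classes V E"
  shows "card {D \<in> clique_classes V E. quot_adj E C D}
    \<le> (\<Sum>i=1..quot_omega V E - 1. alpha_star V E ^ i)"
proof -
  have "card {D \<in> clique_classes V E. \<forall>C'\<in>{C}. quot_adj E C' D}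
    \<le> (\<Sum>i=1..quot_omega V E - 1. alpha_star V E ^ i)"
  proof (rule card_common_neighbours_le)
    show "finite (clique_classes V E)"
      using finite_clique_classes[OF fin_graph_finite[OF assms(1)]] .
    show "\<not> quot_adj E D D" for D
      unfolding quot_adj_def by simp
    show "quot_adj E D D' \<Longrightarrow> quot_adj E D' D" for D D'
      by (rule quot_adj_sym[OF assms(1)])
    show "is_clique (clique_classes V E) (quot_adj E) Q \<Longrightarrow> card Q \<le> quot_omega V E" for Q
      by (rule quot_clique_card_le_quot_omega[OF assms(1)])
    show "card S \<le> alpha_star V E"
      if "D \<in> clique_classes V E" "S \<subseteq> {D' \<in> clique_classes V E. quot_adj E D D'}"
        "indep_set (quot_adj E) S" for D S
      using quot_local_indep_card_le_alpha_star[OF assms(1) that] .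
    show "is_clique (clique_classes V E) (quot_adj E) {C}"
      using assms(2) unfolding is_clique_def by simp
  qed simp_all
  then show ?thesis
    by (simp only: singleton_iff ball_simps simp_thms)
qed

theorem lemma5p2:
  assumes "fin_graph V E"
  shows "quot_max_degree V E \<le> alpha_star V E ^ quot_omega V E"
proof (rule quot_max_degree_le[OF fin_graph_finite[OF assms]])
  fix C
  assume C: "C \<in> clique_classes V E"
  let ?a = "alpha_star V E" and ?k = "quot_omega V E"
  show "card {D \<in> clique_classes V E. quot_adj E C D} \<le> ?a ^ ?k"
  proof (cases "?a \<le> 1")
    case True
    then have "{D \<in> clique_classes V E. quot_adj E C D} = {}"
      using no_quot_adj_if_alpha_star_le_1[OF assms True C] by blast
    then show ?thesis
      by (metis card.empty zero_le)
  next
    case False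
    have "(\<Sum>i=1..?k - 1. ?a ^ i) \<le> ?a ^ ?k"
      using sum_powers_plus_le_power[of ?a "?k - 1"] False by (cases ?k) simp_all
    then show ?thesis
      using quot_degree_le_sum_powers[OF assms C] by (rule order_trans[rotated])
  qed
qed

end
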